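(* Let $k$ be a positive integer. If an edge-colored graph $G$ of order $n$ satisfies $\delta^c(G)\ge n/2+64k+1$, then $G$ contains $k$ vertex-disjoint rainbow cycles.
   Context: An edge-colored graph is a finite simple graph $G$ with a map $C:E(G)\to\mathbb{N}$. The color degree $d^c(v)$ of a vertex $v$ is the number of distinct colors on edges incident to $v$; $\delta^c(G)=\min_{v\in V(G)} d^c(v)$. A subgraph is rainbow if all its edges have distinct colors. *)

theory Defs
  imports Complex_Main
begin

definition simple_graph :: "'a set \<Rightarrow> 'a set set \<Rightarrow> bool" where
  "simple_graph V E \<longleftrightarrow> finite V \<and> (\<forall>e\<in>E. e \<subseteq> V \<and> card e = 2)"

definition color_degree :: "'a set set \<Rightarrow> ('a set \<Rightarrow> nat) \<Rightarrow> 'a \<Rightarrow> nat" where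
  "color_degree E C v = card (C ` {e \<in> E. v \<in> e})"

definition min_color_degree :: "'a set \<Rightarrow> 'a set set \<Rightarrow> ('a set \<Rightarrow> nat) \<Rightarrow> nat" where
  "min_color_degree V E C = Min (color_degree E C ` V)"

definition cycle_edges :: "'a list \<Rightarrow> 'a set set" where
  "cycle_edges vs = {{vs ! i, vs ! ((i + 1) mod length vs)} | i. i < length vs}"

definition is_cycle :: "'a set \<Rightarrow> 'a set set \<Rightarrow> 'a list \<Rightarrow> bool" where
  "is_cycle V E vs \<longleftrightarrow> length vs \<ge> 3 \<and> distinct vs \<and> set vs \<subseteq> V \<and> cycle_edges vs \<subseteq> E"

definition rainbow :: "('a set \<Rightarrow> nat) \<Rightarrow> 'a set set \<Rightarrow> bool" where
  "rainbow C F \<longleftrightarrow> inj_on C F"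

end

theory Submission
  imports Defs
begin

(* Call u a private neighbor of v (within a vertex set W) if vu is the only edge of G[W] at u
   with its color, so that deleting v lowers the color degree of exactly the private neighbors
   of v; call a color at v private if all its edges at v lead to private neighbors. Without
   rainbow triangles, private neighbors of v reached through different colors are non-adjacent.
   Hence, for a vertex v with the most private colors, v itself or a neighbor x along a private
   color satisfies d^c(x) + #private(x) <= n, and deleting it lowers the sum of color degrees by
   at most n. Inductively this sum is at most n(n+1)/2, so d^c >= n/2 + 1 everywhere forces a
   rainbow triangle. Deleting its three vertices lowers every color degree by at most 3 while
   n/2 drops by 3/2, so the slack 64k yields k disjoint rainbow triangles greedily. *)

lemma cycle_edges_triangle: "cycle_edges [a,b,c] = {{a,b},{b,c},{c,a}}"
proof -
  have "cycle_edges [a,b,c] = (\<lambda>i. {[a,b,c] ! i, [a,b,c] ! ((i + 1) mod 3)}) ` {..<3}"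
    unfolding cycle_edges_def by auto
  also have "{..<3::nat} = {0,1,2}" by auto
  finally show ?thesis by (simp add: numeral_2_eq_2)
qed

lemma rainbow_triangle_cycle:
  assumes "a \<in> W" "b \<in> W" "c \<in> W" "a \<noteq> b" "b \<noteq> c" "a \<noteq> c"
    and "{a,b} \<in> E" "{b,c} \<in> E" "{a,c} \<in> E"
    and "C {a,b} \<noteq> C {b,c}" "C {b,c} \<noteq> C {a,c}" "C {a,b} \<noteq> C {a,c}"
  shows "is_cycle W E [a,b,c] \<and> rainbow C (cycle_edges [a,b,c])"
proof -
  have ca: "{c,a} = {a,c}" by (rule insert_commute)
  have "is_cycle W E [a,b,c]"
    unfolding is_cycle_def cycle_edges_triangle ca using assms(1-9) by simp
  moreover have "rainbow C (cycle_edges [a,b,c])"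
    unfolding rainbow_def cycle_edges_triangle ca inj_on_def using assms(10-12) by auto
  ultimately show ?thesis ..
qed

lemma pairwise_disjoint_Cons:
  assumes "\<forall>i<length cs. \<forall>j<length cs. i \<noteq> j \<longrightarrow> set (cs ! i) \<inter> set (cs ! j) = {}"
    and "\<forall>c\<in>set cs. set d \<inter> set c = {}"
  shows "\<forall>i<length (d # cs). \<forall>j<length (d # cs). i \<noteq> j \<longrightarrow>
           set ((d # cs) ! i) \<inter> set ((d # cs) ! j) = {}"
proof (intro allI impI)
  fix i j assume ij: "i < length (d # cs)" "j < length (d # cs)" "i \<noteq> j"
  show "set ((d # cs) ! i) \<inter> set ((d # cs) ! j) = {}"
  proof (cases i; cases j)
    fix i' j' assume "i = Suc i'" "j = Suc j'"
    then show ?thesis using assms(1) ij by auto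
  qed (use assms(2) ij in \<open>auto dest: nth_mem\<close>)
qed

locale edge_colored_graph =
  fixes E :: "'a set set" and C :: "'a set \<Rightarrow> nat"
  assumes card_edge: "\<And>e. e \<in> E \<Longrightarrow> card e = 2"
begin

abbreviation incident_edges :: "'a set \<Rightarrow> 'a \<Rightarrow> 'a set set" where
  "incident_edges W u \<equiv> {e\<in>E. u \<in> e \<and> e \<subseteq> W}"

definition induced_color_degree :: "'a set \<Rightarrow> 'a \<Rightarrow> nat" where
  "induced_color_degree W u = card (C ` incident_edges W u)"

definition neighbors :: "'a set \<Rightarrow> 'a \<Rightarrow> 'a set" where
  "neighbors W v = {u\<in>W. {v,u} \<in> E}"

definition private_neighbors :: "'a set \<Rightarrow> 'a \<Rightarrow> 'a set" where
  "private_neighbors W v = {u \<in> neighbors W v.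
     \<forall>e\<in>E. u \<in> e \<longrightarrow> e \<subseteq> W \<longrightarrow> C e = C {v,u} \<longrightarrow> e = {v,u}}"

definition private_colors :: "'a set \<Rightarrow> 'a \<Rightarrow> nat set" where
  "private_colors W v = {c \<in> (\<lambda>u. C {v,u}) ` neighbors W v.
     \<forall>u\<in>neighbors W v. C {v,u} = c \<longrightarrow> u \<in> private_neighbors W v}"

definition rainbow_triangle_free :: "'a set \<Rightarrow> bool" where
  "rainbow_triangle_free W \<longleftrightarrow> (\<forall>a\<in>W. \<forall>b\<in>W. \<forall>c\<in>W. a \<noteq> b \<longrightarrow> b \<noteq> c \<longrightarrow> a \<noteq> c \<longrightarrow>
     {a,b} \<in> E \<longrightarrow> {b,c} \<in> E \<longrightarrow> {a,c} \<in> E \<longrightarrow>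
     C {a,b} = C {b,c} \<or> C {b,c} = C {a,c} \<or> C {a,b} = C {a,c})"

lemma edge_neq: "{a,b} \<in> E \<Longrightarrow> a \<noteq> b"
  using card_edge by fastforce

lemma edge_at:
  assumes "e \<in> E" "u \<in> e"
  obtains y where "y \<noteq> u" "e = {u,y}"
proof -
  obtain a b where "a \<noteq> b" "e = {a,b}" using card_edge[OF assms(1)] card_2_iff by metis
  with assms(2) show ?thesis using that[of a] that[of b] by (auto simp: insert_commute)
qed

lemma finite_incident_edges: "finite W \<Longrightarrow> finite (incident_edges W u)"
  by (rule finite_subset[of _ "Pow W"]) auto

lemma neighbors_subset: "neighbors W v \<subseteq> W - {v}"
  unfolding neighbors_def using edge_neq by auto

lemma private_neighbors_subset: "private_neighbors W v \<subseteq> neighbors W v"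
  unfolding private_neighbors_def by auto

lemma incident_colors_eq:
  assumes "v \<in> W"
  shows "C ` incident_edges W v = (\<lambda>u. C {v,u}) ` neighbors W v"
proof
  show "C ` incident_edges W v \<subseteq> (\<lambda>u. C {v,u}) ` neighbors W v"
  proof
    fix c assume "c \<in> C ` incident_edges W v"
    then obtain e where e: "e \<in> E" "v \<in> e" "e \<subseteq> W" "c = C e" by auto
    obtain y where "y \<noteq> v" "e = {v,y}" using e(1,2) by (rule edge_at)
    with e show "c \<in> (\<lambda>u. C {v,u}) ` neighbors W v" unfolding neighbors_def by auto
  qed
  show "(\<lambda>u. C {v,u}) ` neighbors W v \<subseteq> C ` incident_edges W v"
    using assms unfolding neighbors_def by auto
qed

lemma induced_color_degree_less_card:
  assumes "finite W" "v \<in> W"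
  shows "induced_color_degree W v < card W"
proof -
  have "induced_color_degree W v \<le> card (neighbors W v)"
    unfolding induced_color_degree_def incident_colors_eq[OF assms(2)] by (rule card_image_le)
      (use assms(1) neighbors_subset in \<open>blast intro: finite_subset\<close>)
  also have "\<dots> \<le> card (W - {v})"
    using assms(1) neighbors_subset by (intro card_mono) auto
  also have "\<dots> < card W"
    using assms by (rule card_Diff1_less)
  finally show ?thesis .
qed

lemma induced_color_degree_Diff_le:
  assumes "finite W" "finite X" "u \<notin> X"
  shows "induced_color_degree W u \<le> induced_color_degree (W - X) u + card X"
proof -
  have "C ` incident_edges W u
      \<subseteq> C ` incident_edges (W - X) u \<union> (\<lambda>y. C {u,y}) ` X"
  proof
    fix c assume "c \<in> C ` incident_edges W u"
    then obtain e where e: "e \<in> E" "u \<in> e" "e \<subseteq> W" "c = C e" by auto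
    show "c \<in> C ` incident_edges (W - X) u \<union> (\<lambda>y. C {u,y}) ` X"
    proof (cases "e \<subseteq> W - X")
      case True
      with e show ?thesis by auto
    next
      case False
      then obtain y where "y \<in> e" "y \<in> X" using e by auto
      moreover obtain z where "z \<noteq> u" "e = {u,z}" using e(1,2) by (rule edge_at)
      ultimately show ?thesis using e assms(3) by auto
    qed
  qed
  then have "induced_color_degree W u
      \<le> card (C ` incident_edges (W - X) u \<union> (\<lambda>y. C {u,y}) ` X)"
    unfolding induced_color_degree_def using assms
    by (intro card_mono) (auto intro: finite_incident_edges)
  also have "\<dots> \<le> induced_color_degree (W - X) u + card ((\<lambda>y. C {u,y}) ` X)"
    unfolding induced_color_degree_def by (rule card_Un_le)
  also have "\<dots> \<le> induced_color_degree (W - X) u + card X"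
    by (simp add: card_image_le assms(2))
  finally show ?thesis .
qed

lemma induced_color_degree_bound_Diff:
  assumes "finite W" "X \<subseteq> W"
    and "\<forall>u\<in>W. real (card W) / 2 + s \<le> real (induced_color_degree W u)"
  shows "\<forall>u\<in>W - X. real (card (W - X)) / 2 + s - real (card X) / 2
                      \<le> real (induced_color_degree (W - X) u)"
proof
  fix u assume u: "u \<in> W - X"
  have finX: "finite X" using assms(1,2) by (rule finite_subset[rotated])
  have "induced_color_degree W u \<le> induced_color_degree (W - X) u + card X"
    using u by (intro induced_color_degree_Diff_le assms(1) finX) auto
  moreover have "real (card (W - X)) = real (card W) - real (card X)"
    using assms(1,2) finX by (simp add: card_Diff_subset card_mono)
  moreover have "real (card W) / 2 + s \<le> real (induced_color_degree W u)"
    using assms(3) u by blast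
  ultimately show "real (card (W - X)) / 2 + s - real (card X) / 2
                    \<le> real (induced_color_degree (W - X) u)"
    by linarith
qed

lemma induced_color_degree_delete_non_private:
  assumes "finite W" "u \<in> W - {x}" "u \<notin> private_neighbors W x"
  shows "induced_color_degree W u \<le> induced_color_degree (W - {x}) u"
proof -
  have "C ` incident_edges W u \<subseteq> C ` incident_edges (W - {x}) u"
  proof
    fix c assume "c \<in> C ` incident_edges W u"
    then obtain e where e: "e \<in> E" "u \<in> e" "e \<subseteq> W" "c = C e" by auto
    show "c \<in> C ` incident_edges (W - {x}) u"
    proof (cases "x \<in> e")
      case False
      with e show ?thesis by auto
    next
      case True
      obtain z where "z \<noteq> u" "e = {u,z}" using e(1,2) by (rule edge_at)
      with True assms(2) have exu: "e = {x,u}" by auto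
      with e assms(2) have "u \<in> neighbors W x" unfolding neighbors_def by auto
      then obtain e' where e': "e' \<in> E" "u \<in> e'" "e' \<subseteq> W" "C e' = C {x,u}" "e' \<noteq> {x,u}"
        using assms(3) unfolding private_neighbors_def by auto
      obtain z' where "z' \<noteq> u" "e' = {u,z'}" using e'(1,2) by (rule edge_at)
      with e'(5) assms(2) have "x \<notin> e'" by auto
      with e' have "e' \<in> incident_edges (W - {x}) u" by auto
      then have "C e' \<in> C ` incident_edges (W - {x}) u" by (rule imageI)
      with e'(4) exu e(4) show ?thesis by simp
    qed
  qed
  then show ?thesis
    unfolding induced_color_degree_def using assms(1)
    by (intro card_mono) (auto intro: finite_incident_edges)
qed

text \<open>Each non-private color at v is carried by an edge to a non-private neighbor.\<close>

lemma induced_color_degree_add_private_neighbors_le: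
  assumes "finite W" "v \<in> W"
  shows "induced_color_degree W v + card (private_neighbors W v)
           \<le> card (neighbors W v) + card (private_colors W v)"
proof -
  let ?f = "\<lambda>u. C {v,u}" and ?N = "neighbors W v"
  let ?K = "?f ` ?N" and ?U = "private_neighbors W v" and ?B = "private_colors W v"
  have finN: "finite ?N" using neighbors_subset assms(1) finite_subset by blast
  have "?K - ?B \<subseteq> ?f ` (?N - ?U)"
  proof
    fix c assume "c \<in> ?K - ?B"
    then obtain u where "u \<in> ?N" "?f u = c" "u \<notin> ?U" unfolding private_colors_def by blast
    then show "c \<in> ?f ` (?N - ?U)" by blast
  qed
  then have "card (?K - ?B) \<le> card (?N - ?U)"
    using finN by (meson card_image_le card_mono finite_Diff finite_imageI le_trans)
  moreover have "card ?K = card (?K - ?B) + card ?B"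
    using finN card_Diff_subset[of ?B ?K] card_mono[of ?K ?B] finite_subset[of ?B ?K]
    unfolding private_colors_def by auto
  moreover have "card ?N = card (?N - ?U) + card ?U"
    using finN card_Diff_subset[of ?U ?N] card_mono[of ?N ?U] finite_subset[of ?U ?N]
      private_neighbors_subset by auto
  moreover have "induced_color_degree W v = card ?K"
    unfolding induced_color_degree_def incident_colors_eq[OF assms(2)] ..
  ultimately show ?thesis by linarith
qed

lemma private_neighborsD:
  assumes "u \<in> private_neighbors W v" "e \<in> E" "u \<in> e" "e \<subseteq> W" "C e = C {v,u}"
  shows "e = {v,u}"
  using assms unfolding private_neighbors_def by blast

lemma rainbow_triangle_freeD:
  assumes "rainbow_triangle_free W" "a \<in> W" "b \<in> W" "c \<in> W" "a \<noteq> b" "b \<noteq> c" "a \<noteq> c"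
    and "{a,b} \<in> E" "{b,c} \<in> E" "{a,c} \<in> E"
  shows "C {a,b} = C {b,c} \<or> C {b,c} = C {a,c} \<or> C {a,b} = C {a,c}"
  using assms unfolding rainbow_triangle_free_def by simp

lemma private_neighbors_not_adjacent:
  assumes free: "rainbow_triangle_free W" and v: "v \<in> W"
    and x: "x \<in> private_neighbors W v" and y: "y \<in> private_neighbors W v"
    and colors: "C {v,x} \<noteq> C {v,y}"
  shows "{x,y} \<notin> E"
proof
  assume xy: "{x,y} \<in> E"
  have xN: "x \<in> W" "{v,x} \<in> E" and yN: "y \<in> W" "{v,y} \<in> E"
    using x y unfolding private_neighbors_def neighbors_def by auto
  have d: "v \<noteq> x" "x \<noteq> y" "v \<noteq> y" using edge_neq xN yN colors by auto
  have "{x,y} \<subseteq> W" using xN yN by simp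
  then have "{x,y} = {v,x}" if "C {x,y} = C {v,x}"
    using private_neighborsD[OF x xy _ _ that] by simp
  moreover have "{x,y} = {v,y}" if "C {x,y} = C {v,y}"
    using private_neighborsD[OF y xy _ \<open>{x,y} \<subseteq> W\<close> that] by simp
  moreover have "{x,y} \<noteq> {v,x}" "{x,y} \<noteq> {v,y}" using d by (auto simp: doubleton_eq_iff)
  ultimately show False
    using rainbow_triangle_freeD[OF free v xN(1) yN(1) d xN(2) xy yN(2)] colors by metis
qed

text \<open>The private neighbors of v reached through the other private colors avoid the
  neighborhood of x.\<close>

lemma neighbors_add_private_colors_le:
  assumes fin: "finite W" and free: "rainbow_triangle_free W" and v: "v \<in> W"
    and x: "x \<in> neighbors W v" and c: "C {v,x} \<in> private_colors W v"
  shows "card (neighbors W x) + card (private_colors W v) \<le> card W"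
proof -
  let ?f = "\<lambda>u. C {v,u}"
  define Y where "Y = {y \<in> neighbors W v. ?f y \<in> private_colors W v \<and> ?f y \<noteq> ?f x}"
  have xU: "x \<in> private_neighbors W v" using c x unfolding private_colors_def by auto
  have xW: "x \<in> W" using x unfolding neighbors_def by auto
  have disjoint: "Y \<inter> neighbors W x = {}"
  proof (rule ccontr)
    assume "Y \<inter> neighbors W x \<noteq> {}"
    then obtain y where y: "y \<in> Y" "y \<in> neighbors W x" by blast
    then have "y \<in> private_neighbors W v" "?f x \<noteq> ?f y"
      unfolding Y_def private_colors_def by auto
    with y(2) show False
      using private_neighbors_not_adjacent[OF free v xU] unfolding neighbors_def by auto
  qed
  have finY: "finite Y" and finNx: "finite (neighbors W x)"
    using fin unfolding Y_def neighbors_def by auto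
  have "card Y + card (neighbors W x) = card (Y \<union> neighbors W x)"
    using disjoint finY finNx by (simp add: card_Un_disjoint)
  also have "\<dots> \<le> card (W - {x})"
    using fin neighbors_subset by (intro card_mono) (auto simp: Y_def neighbors_def)
  finally have "card Y + card (neighbors W x) \<le> card (W - {x})" .
  moreover have "private_colors W v - {?f x} \<subseteq> ?f ` Y"
    unfolding Y_def private_colors_def by auto
  then have "card (private_colors W v - {?f x}) \<le> card Y"
    using finY by (meson card_image_le card_mono finite_imageI le_trans)
  moreover have "finite (private_colors W v)"
    using fin unfolding private_colors_def neighbors_def by auto
  then have "card (private_colors W v) = card (private_colors W v - {?f x}) + 1"
    using card_Suc_Diff1[OF _ c] by simp
  moreover have "card (W - {x}) + 1 = card W"
    using card_Suc_Diff1[OF fin xW] by simp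
  ultimately show ?thesis by linarith
qed

lemma exists_vertex_induced_color_degree_add_private_le:
  assumes fin: "finite W" and ne: "W \<noteq> {}" and free: "rainbow_triangle_free W"
  shows "\<exists>x\<in>W. induced_color_degree W x + card (private_neighbors W x) \<le> card W"
proof -
  obtain v where v: "v \<in> W"
    and vmax: "\<And>w. w \<in> W \<Longrightarrow> card (private_colors W w) \<le> card (private_colors W v)"
  proof -
    let ?g = "\<lambda>w. card (private_colors W w)"
    have "Max (?g ` W) \<in> ?g ` W" using fin ne by simp
    then obtain v where "v \<in> W" "?g v = Max (?g ` W)" by auto
    with fin show ?thesis by (intro that[of v]) auto
  qed
  show ?thesis
  proof (cases "private_colors W v = {}")
    case True
    have "card (neighbors W v) \<le> card (W - {v})"
      using neighbors_subset fin by (intro card_mono) auto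
    also have "\<dots> \<le> card W" using fin by (simp add: card_Diff1_le)
    finally show ?thesis
      using induced_color_degree_add_private_neighbors_le[OF fin v] True v
      by (intro bexI[of _ v]) auto
  next
    case False
    then obtain x where x: "x \<in> neighbors W v" "C {v,x} \<in> private_colors W v"
      unfolding private_colors_def by auto
    have xW: "x \<in> W" using x unfolding neighbors_def by auto
    have "induced_color_degree W x + card (private_neighbors W x)
            \<le> card (neighbors W x) + card (private_colors W x)"
      using induced_color_degree_add_private_neighbors_le[OF fin xW] .
    also have "\<dots> \<le> card (neighbors W x) + card (private_colors W v)"
      using vmax[OF xW] by simp
    also have "\<dots> \<le> card W"
      using neighbors_add_private_colors_le[OF fin free v x] .
    finally show ?thesis using xW by auto
  qed
qed

lemma rainbow_triangle_free_subset:
  "rainbow_triangle_free W \<Longrightarrow> W' \<subseteq> W \<Longrightarrow> rainbow_triangle_free W'"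
  unfolding rainbow_triangle_free_def by blast

lemma induced_color_degree_delete_le:
  assumes "finite W" "u \<in> W - {x}"
  shows "induced_color_degree W u
           \<le> induced_color_degree (W - {x}) u + (if u \<in> private_neighbors W x then 1 else 0)"
proof (cases "u \<in> private_neighbors W x")
  case True
  then show ?thesis using induced_color_degree_Diff_le[of W "{x}" u] assms by simp
next
  case False
  then show ?thesis using induced_color_degree_delete_non_private[OF assms] by simp
qed

lemma sum_induced_color_degree_delete_le:
  assumes "finite W" "x \<in> W"
  shows "(\<Sum>u\<in>W. induced_color_degree W u)
           \<le> induced_color_degree W x + card (private_neighbors W x)
             + (\<Sum>u\<in>W - {x}. induced_color_degree (W - {x}) u)"
proof -
  have "(\<Sum>u\<in>W - {x}. induced_color_degree W u)
      \<le> (\<Sum>u\<in>W - {x}. induced_color_degree (W - {x}) u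
                          + (if u \<in> private_neighbors W x then 1 else 0))"
    by (rule sum_mono) (rule induced_color_degree_delete_le[OF assms(1)])
  also have "\<dots> = (\<Sum>u\<in>W - {x}. induced_color_degree (W - {x}) u)
                    + card ((W - {x}) \<inter> private_neighbors W x)"
    using assms(1) by (simp add: sum.distrib sum.If_cases)
  also have "(W - {x}) \<inter> private_neighbors W x = private_neighbors W x"
    using private_neighbors_subset neighbors_subset by blast
  finally show ?thesis
    using assms by (simp add: sum.remove)
qed

lemma sum_induced_color_degree_le:
  "finite W \<Longrightarrow> rainbow_triangle_free W \<Longrightarrow>
     2 * (\<Sum>u\<in>W. induced_color_degree W u) \<le> card W * (card W + 1)"
proof (induction "card W" arbitrary: W rule: less_induct)
  case less
  show ?case
  proof (cases "W = {}")
    case True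
    then show ?thesis by simp
  next
    case False
    obtain x where x: "x \<in> W"
      and x_le: "induced_color_degree W x + card (private_neighbors W x) \<le> card W"
      using exists_vertex_induced_color_degree_add_private_le[OF less.prems(1) False less.prems(2)]
      by blast
    let ?W' = "W - {x}"
    have card_W': "card W = Suc (card ?W')"
      using card_Suc_Diff1[OF less.prems(1) x] by simp
    have IH: "2 * (\<Sum>u\<in>?W'. induced_color_degree ?W' u) \<le> card ?W' * (card ?W' + 1)"
    proof (rule less.hyps)
      show "card ?W' < card W" using card_W' by simp
      show "finite ?W'" using less.prems(1) by simp
      show "rainbow_triangle_free ?W'"
        using less.prems(2) by (rule rainbow_triangle_free_subset) blast
    qed
    have "(\<Sum>u\<in>W. induced_color_degree W u)
        \<le> induced_color_degree W x + card (private_neighbors W x)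
          + (\<Sum>u\<in>?W'. induced_color_degree ?W' u)"
      using less.prems(1) x by (rule sum_induced_color_degree_delete_le)
    then have "2 * (\<Sum>u\<in>W. induced_color_degree W u) \<le> 2 * card W + card ?W' * (card ?W' + 1)"
      using x_le IH by linarith
    also have "\<dots> = card W * (card W + 1)"
      using card_W' by simp
    finally show ?thesis .
  qed
qed

lemma not_rainbow_triangle_free:
  assumes "finite W" "W \<noteq> {}" "\<forall>u\<in>W. card W + 2 \<le> 2 * induced_color_degree W u"
  shows "\<not> rainbow_triangle_free W"
proof
  assume "rainbow_triangle_free W"
  with assms(1) have "2 * (\<Sum>u\<in>W. induced_color_degree W u) \<le> card W * (card W + 1)"
    by (rule sum_induced_color_degree_le)
  moreover have "(\<Sum>u\<in>W. card W + 2) \<le> (\<Sum>u\<in>W. 2 * induced_color_degree W u)"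
    by (rule sum_mono) (use assms(3) in blast)
  then have "card W * (card W + 2) \<le> 2 * (\<Sum>u\<in>W. induced_color_degree W u)"
    by (simp add: sum_distrib_left)
  moreover have "card W * (card W + 1) < card W * (card W + 2)"
    using assms(1,2) by (simp add: card_gt_0_iff)
  ultimately show False by linarith
qed

lemma rainbow_triangle_exists:
  assumes "finite W" "W \<noteq> {}" "\<forall>u\<in>W. card W + 2 \<le> 2 * induced_color_degree W u"
  obtains t where "length t = 3" "is_cycle W E t" "rainbow C (cycle_edges t)"
proof -
  obtain a b c where "a \<in> W" "b \<in> W" "c \<in> W" "a \<noteq> b" "b \<noteq> c" "a \<noteq> c"
    "{a,b} \<in> E" "{b,c} \<in> E" "{a,c} \<in> E"
    "C {a,b} \<noteq> C {b,c}" "C {b,c} \<noteq> C {a,c}" "C {a,b} \<noteq> C {a,c}"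
    using not_rainbow_triangle_free[OF assms] unfolding rainbow_triangle_free_def by meson
  then have "is_cycle W E [a,b,c] \<and> rainbow C (cycle_edges [a,b,c])"
    by (rule rainbow_triangle_cycle)
  then show ?thesis using that[of "[a,b,c]"] by simp
qed

lemma color_degree_condition_Diff:
  assumes "finite W" "W \<noteq> {}" "X \<subseteq> W" "card X \<le> 128"
    and "\<forall>u\<in>W. real (card W) / 2 + 64 * real (Suc k) + 1 \<le> real (induced_color_degree W u)"
  shows "W - X \<noteq> {}"
    and "\<forall>u\<in>W - X. real (card (W - X)) / 2 + 64 * real k + 1 \<le> real (induced_color_degree (W - X) u)"
proof -
  have X_bound: "real (card X) \<le> 128" and Suc_k: "real (Suc k) = real k + 1"
    using assms(4) by simp_all
  obtain u where u: "u \<in> W" using assms(2) by blast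
  have "real (induced_color_degree W u) < real (card W)"
    using induced_color_degree_less_card[OF assms(1) u] by simp
  with assms(5) u X_bound Suc_k have "card X < card W" by fastforce
  then show "W - X \<noteq> {}"
    using card_mono[OF finite_subset[OF assms(3,1)], of W] by auto
  have "\<forall>u\<in>W. real (card W) / 2 + (64 * real (Suc k) + 1) \<le> real (induced_color_degree W u)"
    using assms(5) by (simp add: add.assoc)
  note bound = induced_color_degree_bound_Diff[OF assms(1,3) this]
  show "\<forall>u\<in>W - X. real (card (W - X)) / 2 + 64 * real k + 1 \<le> real (induced_color_degree (W - X) u)"
  proof
    fix u assume "u \<in> W - X"
    with bound have "real (card (W - X)) / 2 + (64 * real (Suc k) + 1) - real (card X) / 2
        \<le> real (induced_color_degree (W - X) u)" by blast
    with X_bound show "real (card (W - X)) / 2 + 64 * real k + 1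
        \<le> real (induced_color_degree (W - X) u)" by (simp add: distrib_left)
  qed
qed

lemma disjoint_rainbow_cycles:
  assumes "finite W" "W \<noteq> {}"
    and "\<forall>u\<in>W. real (card W) / 2 + 64 * real k + 1 \<le> real (induced_color_degree W u)"
  shows "\<exists>cs. length cs = k \<and> (\<forall>c\<in>set cs. is_cycle W E c \<and> rainbow C (cycle_edges c))
           \<and> (\<forall>i<k. \<forall>j<k. i \<noteq> j \<longrightarrow> set (cs ! i) \<inter> set (cs ! j) = {})"
  using assms
proof (induction k arbitrary: W)
  case 0
  show ?case by (intro exI[of _ "[]"]) simp
next
  case (Suc k)
  have "\<forall>u\<in>W. card W + 2 \<le> 2 * induced_color_degree W u"
  proof
    fix u assume "u \<in> W"
    with Suc.prems(3)
    have "real (card W) / 2 + 64 * real (Suc k) + 1 \<le> real (induced_color_degree W u)" by blast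
    then have "real (card W + 2) \<le> real (2 * induced_color_degree W u)" by simp
    then show "card W + 2 \<le> 2 * induced_color_degree W u" by (simp only: of_nat_le_iff)
  qed
  then obtain t where t: "length t = 3" "is_cycle W E t" "rainbow C (cycle_edges t)"
    using rainbow_triangle_exists Suc.prems(1,2) by blast
  have t_sub: "set t \<subseteq> W" and "card (set t) \<le> 128"
    using t unfolding is_cycle_def by (auto simp: distinct_card)
  note W' = color_degree_condition_Diff[OF Suc.prems(1,2) this Suc.prems(3)]
  obtain cs where cs: "length cs = k"
      "\<forall>c\<in>set cs. is_cycle (W - set t) E c \<and> rainbow C (cycle_edges c)"
      "\<forall>i<k. \<forall>j<k. i \<noteq> j \<longrightarrow> set (cs ! i) \<inter> set (cs ! j) = {}"
    using Suc.IH[OF _ W'] Suc.prems(1) by blast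
  have cycles: "\<forall>c\<in>set cs. is_cycle W E c" and disjoint: "\<forall>c\<in>set cs. set t \<inter> set c = {}"
    using cs(2) unfolding is_cycle_def by blast+
  have "\<forall>i<Suc k. \<forall>j<Suc k. i \<noteq> j \<longrightarrow> set ((t # cs) ! i) \<inter> set ((t # cs) ! j) = {}"
    using pairwise_disjoint_Cons[OF _ disjoint] cs(1,3) by simp
  with t cs(1,2) cycles show ?case
    by (intro exI[of _ "t # cs"]) simp
qed

end

theorem corollary1:
  fixes V :: "'a set" and E :: "'a set set" and C :: "'a set \<Rightarrow> nat" and k :: nat
  assumes "simple_graph V E"
    and "V \<noteq> {}"
    and "k \<ge> 1"
    and "real (min_color_degree V E C) \<ge> real (card V) / 2 + 64 * real k + 1"
  shows "\<exists>cs :: 'a list list. length cs = k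
           \<and> (\<forall>c \<in> set cs. is_cycle V E c \<and> rainbow C (cycle_edges c))
           \<and> (\<forall>i < k. \<forall>j < k. i \<noteq> j \<longrightarrow> set (cs ! i) \<inter> set (cs ! j) = {})"
proof -
  have finV: "finite V" and EV: "\<And>e. e \<in> E \<Longrightarrow> e \<subseteq> V \<and> card e = 2"
    using assms(1) unfolding simple_graph_def by auto
  interpret edge_colored_graph E C
    by unfold_locales (use EV in blast)
  have "\<forall>u\<in>V. real (card V) / 2 + 64 * real k + 1 \<le> real (induced_color_degree V u)"
  proof
    fix u assume u: "u \<in> V"
    have "incident_edges V u = {e\<in>E. u \<in> e}" using EV by blast
    then have "induced_color_degree V u = color_degree E C u"
      unfolding induced_color_degree_def color_degree_def by simp
    moreover have "min_color_degree V E C \<le> color_degree E C u"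
      unfolding min_color_degree_def using finV u by (intro Min_le) auto
    ultimately show "real (card V) / 2 + 64 * real k + 1 \<le> real (induced_color_degree V u)"
      using assms(4) by linarith
  qed
  then show ?thesis
    using disjoint_rainbow_cycles[OF finV assms(2)] by blast
qed

end
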